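(* Consider the equation $u_{tx}=2u_yu_{xx}+4u_xu_{xy}-u_{xxxy}$ and the hierarchy of symmetries $\{\chi_{2k+1}\}_{k\ge0}$ defined by $\chi_1=u_x$ and $\mathcal{R}_0(\chi_{2k+1})=-\chi_{2k+3}$, where $\Psi=\mathcal{R}_0(\Phi)$ iff $\Psi_x=4u_x\Phi_x+2u_{xx}\Phi-\Phi_{xxx}$, $\Psi_y=\Phi_t-2u_y\Phi_x+2u_{xy}\Phi$. Then this hierarchy is commutative: the Jacobi bracket $\{\chi_{2i+1},\chi_{2j+1}\}$ vanishes for all $i,j\ge 0$.
   Context: Symmetries are generating functions $\phi$ satisfying the linearized equation $D_xD_t\phi-2u_{xx}D_y\phi-2u_yD_x^2\phi-4u_{xy}D_x\phi-4u_xD_xD_y\phi+D_x^3D_y\phi=0$ on solutions. The symmetries $\chi_{2k+1}$ are local functions of $u$ and its $x$-derivatives (e.g. $\chi_3=u_{xxx}-3u_x^2$). The Jacobi bracket of generating functions $\phi_1,\phi_2$ is $\{\phi_1,\phi_2\}=\sum_\sigma\big(D_\sigma(\phi_1)\partial\phi_2/\partial u_\sigma-D_\sigma(\phi_2)\partial\phi_1/\partial u_\sigma\big)$, the generating function of the commutator of the evolutionary vector fields $\mathrm{Ev}_{\phi_1},\mathrm{Ev}_{\phi_2}$. *)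

theory Defs
  imports "HOL-Analysis.Analysis"
begin

text \<open>A point p assigns to (i,j) the value
of u_{x^i y^j}.  The mixed derivatives u_{x^i y^j t} with i >= 1 are eliminated via the
equation u_{tx} = E; the only t-coordinate a function of x-derivatives can see is u_t,
which is an independent internal coordinate and is passed separately.\<close>

type_synonym jet = "nat \<times> nat \<Rightarrow> real"
type_synonym dfun = "jet \<Rightarrow> real"

inductive dpoly :: "dfun \<Rightarrow> bool" where
  dpoly_const: "dpoly (\<lambda>p. c)"
| dpoly_coord: "dpoly (\<lambda>p. p \<sigma>)"
| dpoly_add: "dpoly F \<Longrightarrow> dpoly G \<Longrightarrow> dpoly (\<lambda>p. F p + G p)"
| dpoly_mult: "dpoly F \<Longrightarrow> dpoly G \<Longrightarrow> dpoly (\<lambda>p. F p * G p)"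

definition depends_below :: "nat \<Rightarrow> dfun \<Rightarrow> bool" where
  "depends_below N F \<longleftrightarrow>
     (\<forall>p q. (\<forall>i j. i < N \<and> j < N \<longrightarrow> p (i, j) = q (i, j)) \<longrightarrow> F p = F q)"

definition dsupp :: "dfun \<Rightarrow> nat" where
  "dsupp F = (SOME N. depends_below N F)"

definition pd :: "nat \<times> nat \<Rightarrow> dfun \<Rightarrow> dfun" where
  "pd \<sigma> F = (\<lambda>p. deriv (\<lambda>s. F (p(\<sigma> := s))) (p \<sigma>))"

definition Dx :: "dfun \<Rightarrow> dfun" where
  "Dx F = (\<lambda>p. \<Sum>i<dsupp F. \<Sum>j<dsupp F. pd (i, j) F p * p (Suc i, j))"

definition Dy :: "dfun \<Rightarrow> dfun" where
  "Dy F = (\<lambda>p. \<Sum>i<dsupp F. \<Sum>j<dsupp F. pd (i, j) F p * p (i, Suc j))"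

definition Eqn :: dfun where
  "Eqn = (\<lambda>p. 2 * p (0, 1) * p (2, 0) + 4 * p (1, 0) * p (1, 1) - p (3, 1))"

definition xfun :: "dfun \<Rightarrow> bool" where
  "xfun F \<longleftrightarrow> dpoly F \<and> (\<forall>p q. (\<forall>i. p (i, 0) = q (i, 0)) \<longrightarrow> F p = F q)"

text \<open>Total t-derivative on solutions, for a function F of u and its x-derivatives;
ut is the value of the (internal) coordinate u_t, and u_{x^i t} = D_x^{i-1} E for i >= 1.\<close>
definition Dt_x :: "dfun \<Rightarrow> real \<Rightarrow> dfun" where
  "Dt_x F ut = (\<lambda>p. pd (0, 0) F p * ut
       + (\<Sum>i\<in>{1..<dsupp F}. pd (i, 0) F p * (Dx ^^ (i - 1)) Eqn p))"

definition R0 :: "dfun \<Rightarrow> dfun \<Rightarrow> bool" where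
  "R0 \<Phi> \<Psi> \<longleftrightarrow>
     Dx \<Psi> = (\<lambda>p. 4 * p (1, 0) * Dx \<Phi> p + 2 * p (2, 0) * \<Phi> p - (Dx ^^ 3) \<Phi> p)
   \<and> (\<forall>ut. Dy \<Psi> = (\<lambda>p. Dt_x \<Phi> ut p - 2 * p (0, 1) * Dx \<Phi> p + 2 * p (1, 1) * \<Phi> p))"

text \<open>Jacobi bracket; only the x,y-jet coordinates are summed since the arguments do not
depend on coordinates involving t-derivatives.\<close>
definition jbr :: "dfun \<Rightarrow> dfun \<Rightarrow> dfun" where
  "jbr F G = (\<lambda>p. let N = max (dsupp F) (dsupp G) in
     \<Sum>i<N. \<Sum>j<N. (Dx ^^ i) ((Dy ^^ j) F) p * pd (i, j) G p
                  - (Dx ^^ i) ((Dy ^^ j) G) p * pd (i, j) F p)"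

end

theory Submission
  imports Defs
begin

text \<open>
For local functions F, G of u and its x-derivatives the bracket is {F, G} = l_G(F) - l_F(G),
where l_F(G) = sum_i dF/du_{x^i} D_x^i G is the linearization of F applied to G.
Evaluate the y-component of R_0(\<chi>_k) = -\<chi>_{k+1} at the jet point where every u_{x^i y} is
replaced by D_x^i \<chi>_j. Its left side becomes -l_{\<chi>_{k+1}}(\<chi>_j); on the right, D_x commutes
with the substitution on expressions affine in the u_{x^i y}, so u_{x^i t} = D_x^{i-1} E becomes
D_x^{i-1} of the x-component of R_0(\<chi>_j), that is -D_x^i \<chi>_{j+1}, and D_t \<chi>_k becomes
-l_{\<chi>_k}(\<chi>_{j+1}). Hence M(k, j) = l_{\<chi>_k}(\<chi>_j) satisfies M(k+1, j) = M(k, j+1) + 2 W(j, k)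
with W antisymmetric, and telescoping along an antidiagonal shows that M is symmetric.
\<close>

section \<open>Partial derivatives of differential polynomials\<close>

lemma dpoly_uminus: "dpoly F \<Longrightarrow> dpoly (\<lambda>p. - F p)"
  using dpoly_mult[OF dpoly_const[of "-1"]] by simp

lemma dpoly_has_partial_derivative:
  "dpoly F \<Longrightarrow>
     \<exists>F'. dpoly F' \<and> (\<forall>q. ((\<lambda>s. F (q(\<sigma> := s))) has_real_derivative F' q) (at (q \<sigma>)))"
proof (induction rule: dpoly.induct)
  case (dpoly_const c)
  show ?case by (intro exI[of _ "\<lambda>p. 0"]) (auto intro: dpoly.dpoly_const)
next
  case (dpoly_coord \<tau>)
  show ?case
    by (intro exI[of _ "\<lambda>p. if \<sigma> = \<tau> then 1 else 0"])
      (auto intro: dpoly.dpoly_const DERIV_ident)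
next
  case (dpoly_add F G)
  then obtain F' G' where "dpoly F'" "dpoly G'"
    and dF: "\<forall>q. ((\<lambda>s. F (q(\<sigma> := s))) has_real_derivative F' q) (at (q \<sigma>))"
    and dG: "\<forall>q. ((\<lambda>s. G (q(\<sigma> := s))) has_real_derivative G' q) (at (q \<sigma>))" by blast
  have "((\<lambda>s. F (q(\<sigma> := s)) + G (q(\<sigma> := s))) has_real_derivative F' q + G' q) (at (q \<sigma>))"
    for q using DERIV_add[OF dF[rule_format] dG[rule_format]] .
  moreover have "dpoly (\<lambda>p. F' p + G' p)" using \<open>dpoly F'\<close> \<open>dpoly G'\<close> by (rule dpoly.dpoly_add)
  ultimately show ?case by blast
next
  case (dpoly_mult F G)
  then obtain F' G' where "dpoly F'" "dpoly G'"
    and dF: "\<forall>q. ((\<lambda>s. F (q(\<sigma> := s))) has_real_derivative F' q) (at (q \<sigma>))"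
    and dG: "\<forall>q. ((\<lambda>s. G (q(\<sigma> := s))) has_real_derivative G' q) (at (q \<sigma>))" by blast
  have "((\<lambda>s. F (q(\<sigma> := s)) * G (q(\<sigma> := s))) has_real_derivative F' q * G q + F q * G' q)
      (at (q \<sigma>))" for q
    using DERIV_mult[OF dF[rule_format, of q] dG[rule_format, of q]] by (simp add: mult.commute)
  moreover have "dpoly (\<lambda>p. F' p * G p + F p * G' p)"
    using \<open>dpoly F'\<close> \<open>dpoly G'\<close> dpoly_mult.hyps by (intro dpoly.dpoly_add dpoly.dpoly_mult)
  ultimately show ?case by blast
qed

lemma pd_eqI: "((\<lambda>s. F (q(\<sigma> := s))) has_real_derivative D) (at (q \<sigma>)) \<Longrightarrow> pd \<sigma> F q = D"
  unfolding pd_def by (rule DERIV_imp_deriv)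

lemma has_real_derivative_pd:
  "dpoly F \<Longrightarrow> ((\<lambda>s. F (q(\<sigma> := s))) has_real_derivative pd \<sigma> F q) (at (q \<sigma>))"
  using dpoly_has_partial_derivative pd_eqI by metis

lemma dpoly_pd: "dpoly F \<Longrightarrow> dpoly (pd \<sigma> F)"
proof -
  assume "dpoly F"
  then obtain F' where "dpoly F'"
    and "\<forall>q. ((\<lambda>s. F (q(\<sigma> := s))) has_real_derivative F' q) (at (q \<sigma>))"
    using dpoly_has_partial_derivative by blast
  moreover from this have "pd \<sigma> F = F'" using pd_eqI by blast
  ultimately show ?thesis by simp
qed

lemma pd_add: "dpoly F \<Longrightarrow> dpoly G \<Longrightarrow> pd \<sigma> (\<lambda>p. F p + G p) q = pd \<sigma> F q + pd \<sigma> G q"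
  by (intro pd_eqI DERIV_add has_real_derivative_pd)

lemma pd_mult:
  assumes "dpoly F" and "dpoly G"
  shows "pd \<sigma> (\<lambda>p. F p * G p) q = pd \<sigma> F q * G q + F q * pd \<sigma> G q"
  using DERIV_mult[OF has_real_derivative_pd[OF assms(1), of q \<sigma>]
      has_real_derivative_pd[OF assms(2), of q \<sigma>]]
  by (intro pd_eqI) (simp add: mult.commute)

lemma pd_uminus: "dpoly F \<Longrightarrow> pd \<sigma> (\<lambda>p. - F p) q = - pd \<sigma> F q"
  by (intro pd_eqI DERIV_minus has_real_derivative_pd)

lemma pd_eq_0_if_constant: "(\<And>s. F (q(\<sigma> := s)) = F q) \<Longrightarrow> pd \<sigma> F q = 0"
  by (intro pd_eqI) simp

lemma pd_coord: "pd \<sigma> (\<lambda>p. p \<tau>) q = (if \<sigma> = \<tau> then 1 else 0)"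
  by (cases "\<sigma> = \<tau>") (auto intro!: pd_eqI DERIV_ident)

section \<open>Finite dependence and the total derivative D_x\<close>

lemma depends_below_mono: "depends_below M F \<Longrightarrow> M \<le> N \<Longrightarrow> depends_below N F"
  unfolding depends_below_def by (meson order_less_le_trans)

lemma depends_below_max:
  "depends_below N F \<Longrightarrow> depends_below M G \<Longrightarrow>
     depends_below (max N M) F \<and> depends_below (max N M) G"
  using depends_below_mono by (metis max.cobounded1 max.cobounded2)

lemma depends_below_binop:
  "depends_below N F \<Longrightarrow> depends_below N G \<Longrightarrow> depends_below N (\<lambda>p. H (F p) (G p))"
  unfolding depends_below_def by metis

lemma depends_below_uminus: "depends_below N F \<Longrightarrow> depends_below N (\<lambda>p. - F p)"
  using depends_below_binop[of N F F "\<lambda>x y. - x"] by simp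

lemma depends_below_coord: "depends_below (Suc (max a b)) (\<lambda>p. p (a, b))"
  unfolding depends_below_def by (simp add: less_Suc_eq_le)

lemma dpoly_depends_below: "dpoly F \<Longrightarrow> \<exists>N. depends_below N F"
proof (induction rule: dpoly.induct)
  case (dpoly_coord \<sigma>)
  then show ?case using depends_below_coord by (metis surj_pair)
next
  case (dpoly_add F G)
  then show ?case using depends_below_max depends_below_binop by metis
next
  case (dpoly_mult F G)
  then show ?case using depends_below_max depends_below_binop by metis
qed (auto simp: depends_below_def)

lemma dpoly_common_depends_below:
  "dpoly F \<Longrightarrow> dpoly G \<Longrightarrow> \<exists>N. depends_below N F \<and> depends_below N G"
  using dpoly_depends_below depends_below_max by metis

lemma depends_below_dsupp: "dpoly F \<Longrightarrow> depends_below (dsupp F) F"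
  unfolding dsupp_def using dpoly_depends_below by (rule someI_ex)

lemma pd_eq_0_outside:
  assumes "depends_below N F" and "\<not> (fst \<sigma> < N \<and> snd \<sigma> < N)"
  shows "pd \<sigma> F q = 0"
proof (rule pd_eq_0_if_constant)
  fix s
  have "(q(\<sigma> := s)) (i, j) = q (i, j)" if "i < N \<and> j < N" for i j
    using assms(2) that by auto
  then show "F (q(\<sigma> := s)) = F q" using assms(1) unfolding depends_below_def by blast
qed

lemma sum_square_extend:
  fixes f :: "nat \<Rightarrow> nat \<Rightarrow> real"
  assumes "N \<le> M" and "\<And>i j. \<not> (i < N \<and> j < N) \<Longrightarrow> f i j = 0"
  shows "(\<Sum>i<N. \<Sum>j<N. f i j) = (\<Sum>i<M. \<Sum>j<M. f i j)"
proof -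
  have "(\<Sum>j<M. f i j) = (\<Sum>j<N. f i j)" for i
    by (rule sum.mono_neutral_right) (use assms in auto)
  then have "(\<Sum>i<M. \<Sum>j<M. f i j) = (\<Sum>i<M. \<Sum>j<N. f i j)" by simp
  also have "\<dots> = (\<Sum>i<N. \<Sum>j<N. f i j)"
    by (rule sum.mono_neutral_right) (use assms in \<open>auto intro!: sum.neutral\<close>)
  finally show ?thesis by simp
qed

lemma Dx_eq_sum:
  assumes "dpoly F" and "depends_below N F"
  shows "Dx F p = (\<Sum>i<N. \<Sum>j<N. pd (i, j) F p * p (Suc i, j))"
proof -
  let ?M = "max N (dsupp F)"
  have "Dx F p = (\<Sum>i<?M. \<Sum>j<?M. pd (i, j) F p * p (Suc i, j))"
    unfolding Dx_def
    by (intro sum_square_extend) (auto simp: pd_eq_0_outside[OF depends_below_dsupp[OF assms(1)]])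
  also have "\<dots> = (\<Sum>i<N. \<Sum>j<N. pd (i, j) F p * p (Suc i, j))"
    by (intro sum_square_extend[symmetric]) (auto simp: pd_eq_0_outside[OF assms(2)])
  finally show ?thesis .
qed

lemma dpoly_sum:
  "finite A \<Longrightarrow> (\<And>x. x \<in> A \<Longrightarrow> dpoly (f x)) \<Longrightarrow> dpoly (\<lambda>p. \<Sum>x\<in>A. f x p)"
  by (induction rule: finite_induct) (auto intro: dpoly.dpoly_const dpoly.dpoly_add)

lemma dpoly_Dx: "dpoly F \<Longrightarrow> dpoly (Dx F)"
  unfolding Dx_def by (intro dpoly_sum finite_lessThan dpoly_mult dpoly_pd dpoly_coord)

lemma dpoly_Dx_pow: "dpoly F \<Longrightarrow> dpoly ((Dx ^^ n) F)"
  by (induction n) (auto simp: dpoly_Dx)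

lemma Dx_add: "dpoly F \<Longrightarrow> dpoly G \<Longrightarrow> Dx (\<lambda>p. F p + G p) = (\<lambda>p. Dx F p + Dx G p)"
proof
  fix p assume F: "dpoly F" and G: "dpoly G"
  obtain N where N: "depends_below N F" "depends_below N G"
    using dpoly_common_depends_below[OF F G] by blast
  have FG: "depends_below N (\<lambda>p. F p + G p)" using N by (rule depends_below_binop)
  show "Dx (\<lambda>p. F p + G p) p = Dx F p + Dx G p"
    unfolding Dx_eq_sum[OF dpoly_add[OF F G] FG] Dx_eq_sum[OF F N(1)] Dx_eq_sum[OF G N(2)]
    by (simp add: pd_add F G sum.distrib distrib_right)
qed

lemma Dx_mult:
  "dpoly F \<Longrightarrow> dpoly G \<Longrightarrow> Dx (\<lambda>p. F p * G p) = (\<lambda>p. F p * Dx G p + Dx F p * G p)"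
proof
  fix p assume F: "dpoly F" and G: "dpoly G"
  obtain N where N: "depends_below N F" "depends_below N G"
    using dpoly_common_depends_below[OF F G] by blast
  have FG: "depends_below N (\<lambda>p. F p * G p)" using N by (rule depends_below_binop)
  have "Dx (\<lambda>p. F p * G p) p = (\<Sum>i<N. \<Sum>j<N.
      F p * (pd (i, j) G p * p (Suc i, j)) + G p * (pd (i, j) F p * p (Suc i, j)))"
    unfolding Dx_eq_sum[OF dpoly_mult[OF F G] FG] pd_mult[OF F G]
    by (intro sum.cong refl) (simp add: algebra_simps)
  also have "\<dots> = F p * Dx G p + Dx F p * G p"
    unfolding Dx_eq_sum[OF F N(1)] Dx_eq_sum[OF G N(2)]
    by (simp add: sum.distrib sum_distrib_left sum_distrib_right mult.commute)
  finally show "Dx (\<lambda>p. F p * G p) p = F p * Dx G p + Dx F p * G p" .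
qed

lemma Dx_uminus: "dpoly F \<Longrightarrow> Dx (\<lambda>p. - F p) = (\<lambda>p. - Dx F p)"
proof
  fix p assume F: "dpoly F"
  obtain N where N: "depends_below N F" using dpoly_depends_below F by blast
  show "Dx (\<lambda>p. - F p) p = - Dx F p"
    unfolding Dx_eq_sum[OF dpoly_uminus[OF F] depends_below_uminus[OF N]] Dx_eq_sum[OF F N]
    by (simp add: pd_uminus[OF F] sum_negf)
qed

lemma Dx_pow_uminus: "dpoly F \<Longrightarrow> (Dx ^^ n) (\<lambda>p. - F p) = (\<lambda>p. - (Dx ^^ n) F p)"
  by (induction n) (auto simp: Dx_uminus dpoly_Dx_pow)

lemma Dx_coord: "Dx (\<lambda>p. p (a, b)) = (\<lambda>p. p (Suc a, b))"
proof
  fix p :: jet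
  have "Dx (\<lambda>p. p (a, b)) p = (\<Sum>i<Suc (max a b). \<Sum>j<Suc (max a b).
      if i = a then if j = b then p (Suc a, b) else 0 else 0)"
    unfolding Dx_eq_sum[OF dpoly_coord depends_below_coord] pd_coord
    by (intro sum.cong refl) auto
  also have "\<dots> = p (Suc a, b)" by (simp add: less_Suc_eq_le cong: if_cong)
  finally show "Dx (\<lambda>p. p (a, b)) p = p (Suc a, b)" .
qed

section \<open>Local functions of the x-derivatives\<close>

lemma xfun_dpoly: "xfun F \<Longrightarrow> dpoly F"
  unfolding xfun_def by blast

lemma xfun_cong: "xfun F \<Longrightarrow> (\<And>i. p (i, 0) = q (i, 0)) \<Longrightarrow> F p = F q"
  unfolding xfun_def by blast

lemma xfun_const: "xfun (\<lambda>p. c)"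
  unfolding xfun_def by (auto intro: dpoly.intros)

lemma xfun_coord: "xfun (\<lambda>p. p (a, 0))"
  unfolding xfun_def by (auto intro: dpoly.intros)

lemma xfun_add: "xfun F \<Longrightarrow> xfun G \<Longrightarrow> xfun (\<lambda>p. F p + G p)"
  unfolding xfun_def by (auto intro: dpoly.intros) (metis (mono_tags))

lemma xfun_mult: "xfun F \<Longrightarrow> xfun G \<Longrightarrow> xfun (\<lambda>p. F p * G p)"
  unfolding xfun_def by (auto intro: dpoly.intros) (metis (mono_tags))

lemma xfun_uminus: "xfun F \<Longrightarrow> xfun (\<lambda>p. - F p)"
  unfolding xfun_def by (auto intro: dpoly_uminus)

lemma pd_xfun_eq_0: "xfun F \<Longrightarrow> j \<noteq> 0 \<Longrightarrow> pd (i, j) F q = 0"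
  by (rule pd_eq_0_if_constant) (erule xfun_cong, simp)

lemma xfun_pd: "xfun F \<Longrightarrow> xfun (pd (i, j) F)"
proof -
  assume F: "xfun F"
  have "pd (i, j) F p = pd (i, j) F q" if pq: "\<forall>k. p (k, 0) = q (k, 0)" for p q
  proof (cases "j = 0")
    case True
    have "F (p((i, j) := s)) = F (q((i, j) := s))" for s
      by (rule xfun_cong[OF F]) (use pq in simp)
    then show ?thesis unfolding pd_def using pq True by simp
  qed (simp add: pd_xfun_eq_0[OF F])
  then show ?thesis using F dpoly_pd unfolding xfun_def by blast
qed

lemma sum_square_column0:
  fixes f :: "nat \<Rightarrow> nat \<Rightarrow> real"
  assumes "\<And>i j. j \<noteq> 0 \<Longrightarrow> f i j = 0"
  shows "(\<Sum>i<N. \<Sum>j<N. f i j) = (\<Sum>i<N. f i 0)"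
proof (cases "N = 0")
  case False
  have "(\<Sum>j<N. f i j) = (\<Sum>j\<in>{0}. f i j)" for i
    by (rule sum.mono_neutral_right) (use False assms in auto)
  then show ?thesis by simp
qed simp

lemma Dx_xfun_eq_sum:
  "xfun F \<Longrightarrow> depends_below N F \<Longrightarrow> Dx F p = (\<Sum>i<N. pd (i, 0) F p * p (Suc i, 0))"
  by (simp add: Dx_eq_sum xfun_dpoly sum_square_column0 pd_xfun_eq_0)

lemma Dy_xfun_eq_sum: "xfun F \<Longrightarrow> Dy F p = (\<Sum>i<dsupp F. pd (i, 0) F p * p (i, Suc 0))"
  unfolding Dy_def by (simp add: sum_square_column0 pd_xfun_eq_0)

lemma xfun_Dx: "xfun F \<Longrightarrow> xfun (Dx F)"
proof -
  assume F: "xfun F"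
  have "Dx F p = Dx F q" if "\<forall>i. p (i, 0) = q (i, 0)" for p q
    using that xfun_cong[OF xfun_pd[OF F], where p=p and q=q]
    by (simp add: Dx_xfun_eq_sum[OF F depends_below_dsupp[OF xfun_dpoly[OF F]]])
  then show ?thesis using F dpoly_Dx unfolding xfun_def by blast
qed

lemma xfun_Dx_pow: "xfun F \<Longrightarrow> xfun ((Dx ^^ n) F)"
  by (induction n) (auto simp: xfun_Dx)

section \<open>The linearization and the substitution of D_x^i G for u_{x^i y}\<close>

definition linearization :: "dfun \<Rightarrow> dfun \<Rightarrow> dfun" where
  "linearization F G = (\<lambda>p. \<Sum>i<dsupp F. pd (i, 0) F p * (Dx ^^ i) G p)"

lemma linearization_eq_sum:
  assumes "dpoly F" and "depends_below N F"
  shows "linearization F G p = (\<Sum>i<N. pd (i, 0) F p * (Dx ^^ i) G p)"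
proof -
  have "linearization F G p = (\<Sum>i<max N (dsupp F). pd (i, 0) F p * (Dx ^^ i) G p)"
    unfolding linearization_def
    by (intro sum.mono_neutral_left)
      (auto simp: pd_eq_0_outside[OF depends_below_dsupp[OF assms(1)]])
  also have "\<dots> = (\<Sum>i<N. pd (i, 0) F p * (Dx ^^ i) G p)"
    by (intro sum.mono_neutral_right) (auto simp: pd_eq_0_outside[OF assms(2)])
  finally show ?thesis .
qed

lemma linearization_uminus_left:
  assumes F: "dpoly F"
  shows "linearization (\<lambda>p. - F p) G p = - linearization F G p"
proof -
  obtain N where N: "depends_below N F" using dpoly_depends_below F by blast
  show ?thesis
    unfolding linearization_eq_sum[OF dpoly_uminus[OF F] depends_below_uminus[OF N]]
      linearization_eq_sum[OF F N]
    by (simp add: pd_uminus[OF F] sum_negf)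
qed

lemma linearization_uminus_right:
  "dpoly G \<Longrightarrow> linearization F (\<lambda>p. - G p) p = - linearization F G p"
  by (simp add: linearization_def Dx_pow_uminus sum_negf)

lemma jbr_eq_linearization_diff:
  assumes F: "xfun F" and G: "xfun G"
  shows "jbr F G p = linearization G F p - linearization F G p"
proof -
  let ?N = "max (dsupp F) (dsupp G)"
  have N: "depends_below ?N F" "depends_below ?N G"
    using depends_below_max depends_below_dsupp xfun_dpoly F G by blast+
  have "jbr F G p = (\<Sum>i<?N. (Dx ^^ i) F p * pd (i, 0) G p - (Dx ^^ i) G p * pd (i, 0) F p)"
    unfolding jbr_def Let_def by (subst sum_square_column0) (simp_all add: pd_xfun_eq_0 F G)
  also have "\<dots> = linearization G F p - linearization F G p"
    using N by (simp add: linearization_eq_sum xfun_dpoly F G sum_subtractf mult.commute)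
  finally show ?thesis .
qed

definition y_subst :: "dfun \<Rightarrow> jet \<Rightarrow> jet" where
  "y_subst G p = (\<lambda>(i, j). if j = 1 then (Dx ^^ i) G p else p (i, j))"

lemma y_subst_x [simp]: "y_subst G p (i, 0) = p (i, 0)"
  by (simp add: y_subst_def)

lemma y_subst_y [simp]: "y_subst G p (i, Suc 0) = (Dx ^^ i) G p"
  by (simp add: y_subst_def)

lemma xfun_y_subst: "xfun F \<Longrightarrow> F (y_subst G p) = F p"
  by (erule xfun_cong) simp

inductive y_affine :: "dfun \<Rightarrow> dfun \<Rightarrow> dfun \<Rightarrow> bool" for G where
  y_affine_xfun: "xfun B \<Longrightarrow> y_affine G B B"
| y_affine_coord: "xfun A \<Longrightarrow> y_affine G (\<lambda>p. A p * p (a, 1)) (\<lambda>p. A p * (Dx ^^ a) G p)"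
| y_affine_add: "y_affine G H1 K1 \<Longrightarrow> y_affine G H2 K2 \<Longrightarrow>
    y_affine G (\<lambda>p. H1 p + H2 p) (\<lambda>p. K1 p + K2 p)"

lemma y_affine_dpoly: "y_affine G H K \<Longrightarrow> dpoly H"
  by (induction rule: y_affine.induct) (auto intro: xfun_dpoly dpoly_mult dpoly_coord dpoly_add)

lemma y_affine_xfun_subst:
  assumes "xfun G"
  shows "y_affine G H K \<Longrightarrow> xfun K"
  by (induction rule: y_affine.induct) (auto intro: xfun_mult xfun_Dx_pow xfun_add assms)

lemma y_affine_subst: "y_affine G H K \<Longrightarrow> H (y_subst G p) = K p"
  by (induction rule: y_affine.induct) (auto simp: xfun_y_subst)

lemma y_affine_Dx:
  assumes G: "xfun G"
  shows "y_affine G H K \<Longrightarrow> y_affine G (Dx H) (Dx K)"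
proof (induction rule: y_affine.induct)
  case (y_affine_xfun B)
  then show ?case by (simp add: xfun_Dx y_affine.y_affine_xfun)
next
  case (y_affine_coord A a)
  have A: "dpoly A" using y_affine_coord xfun_dpoly by blast
  have H: "Dx (\<lambda>p. A p * p (a, 1)) = (\<lambda>p. A p * p (Suc a, 1) + Dx A p * p (a, 1))"
    unfolding Dx_mult[OF A dpoly_coord] Dx_coord by (simp add: add.commute)
  have K: "Dx (\<lambda>p. A p * (Dx ^^ a) G p) =
      (\<lambda>p. A p * (Dx ^^ Suc a) G p + Dx A p * (Dx ^^ a) G p)"
    unfolding Dx_mult[OF A dpoly_Dx_pow[OF xfun_dpoly[OF G]]] by simp
  show ?case
    unfolding H K by (intro y_affine.y_affine_add y_affine.y_affine_coord xfun_Dx y_affine_coord)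
next
  case (y_affine_add H1 K1 H2 K2)
  then show ?case
    by (simp add: Dx_add y_affine_dpoly xfun_dpoly y_affine_xfun_subst[OF G] y_affine.y_affine_add)
qed

definition R0_x :: "dfun \<Rightarrow> dfun" where
  "R0_x \<Phi> = (\<lambda>p. 4 * p (1, 0) * Dx \<Phi> p + 2 * p (2, 0) * \<Phi> p - (Dx ^^ 3) \<Phi> p)"

lemma R0_Dx: "R0 \<Phi> \<Psi> \<Longrightarrow> Dx \<Psi> = R0_x \<Phi>"
  unfolding R0_def R0_x_def by (rule conjunct1)

lemma R0_Dy:
  "R0 \<Phi> \<Psi> \<Longrightarrow> Dy \<Psi> = (\<lambda>p. Dt_x \<Phi> ut p - 2 * p (0, 1) * Dx \<Phi> p + 2 * p (1, 1) * \<Phi> p)"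
  unfolding R0_def by (rule conjunct2[THEN spec])

text \<open>R0 quantifies over the value ut of u_t, which enters Dt_x \<Phi> only through d\<Phi>/du;
so \<Phi> cannot depend on u.\<close>

lemma R0_pd_u_eq_0:
  assumes "R0 \<Phi> \<Psi>"
  shows "pd (0, 0) \<Phi> p = 0"
proof -
  have "Dt_x \<Phi> 1 p = Dt_x \<Phi> 0 p"
    using fun_cong[OF R0_Dy[OF assms, of 1], of p] fun_cong[OF R0_Dy[OF assms, of 0], of p] by simp
  then show ?thesis unfolding Dt_x_def by simp
qed

lemma y_affine_Eqn: "y_affine G Eqn (R0_x G)"
proof -
  have E: "Eqn = (\<lambda>p. 2 * p (2, 0) * p (0, 1) + 4 * p (1, 0) * p (1, 1) + (-1) * p (3, 1))"
    by (simp add: Eqn_def fun_eq_iff)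
  have R: "R0_x G = (\<lambda>p. 2 * p (2, 0) * (Dx ^^ 0) G p + 4 * p (1, 0) * (Dx ^^ 1) G p
      + (-1) * (Dx ^^ 3) G p)"
    by (simp add: R0_x_def fun_eq_iff)
  show ?thesis
    unfolding E R by (intro y_affine.intros xfun_mult xfun_const xfun_coord)
qed

lemma Dx_pow_Eqn_y_subst: "xfun G \<Longrightarrow> (Dx ^^ m) Eqn (y_subst G p) = (Dx ^^ m) (R0_x G) p"
proof -
  assume G: "xfun G"
  have "y_affine G ((Dx ^^ m) Eqn) ((Dx ^^ m) (R0_x G))"
    by (induction m) (auto simp: y_affine_Eqn y_affine_Dx[OF G])
  then show ?thesis by (rule y_affine_subst)
qed

lemma Dy_xfun_y_subst: "xfun F \<Longrightarrow> Dy F (y_subst G p) = linearization F G p"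
  by (simp add: Dy_xfun_eq_sum xfun_y_subst[OF xfun_pd] linearization_def)

lemma Dt_x_y_subst:
  assumes \<Phi>: "xfun \<Phi>" and G: "xfun G"
    and pd_u: "\<And>p. pd (0, 0) \<Phi> p = 0" and H: "Dx H = R0_x G"
  shows "Dt_x \<Phi> ut (y_subst G p) = linearization \<Phi> H p"
proof -
  have Dx_pow_pred_Dx: "(Dx ^^ (i - 1)) (Dx H) = (Dx ^^ i) H" if "i \<in> {1..<dsupp \<Phi>}" for i
    using that by (metis Suc_diff_le atLeastLessThan_iff diff_Suc_1 funpow_Suc_right o_apply)
  have "Dt_x \<Phi> ut (y_subst G p) = (\<Sum>i\<in>{1..<dsupp \<Phi>}. pd (i, 0) \<Phi> p * (Dx ^^ (i - 1)) (Dx H) p)"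
    unfolding Dt_x_def H by (simp add: pd_u xfun_y_subst[OF xfun_pd[OF \<Phi>]] Dx_pow_Eqn_y_subst[OF G])
  also have "\<dots> = (\<Sum>i\<in>{1..<dsupp \<Phi>}. pd (i, 0) \<Phi> p * (Dx ^^ i) H p)"
    using Dx_pow_pred_Dx by (intro sum.cong refl) simp
  also have "\<dots> = linearization \<Phi> H p"
    unfolding linearization_def
    by (intro sum.mono_neutral_left) (auto simp: pd_u not_le)
  finally show ?thesis .
qed

lemma linearization_R0:
  assumes \<Phi>: "xfun \<Phi>" and \<Psi>: "xfun \<Psi>" and G: "xfun G"
    and R: "R0 \<Phi> \<Psi>" and H: "Dx H = R0_x G"
  shows "linearization \<Psi> G p = linearization \<Phi> H p + 2 * (\<Phi> p * Dx G p - G p * Dx \<Phi> p)"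
proof -
  let ?q = "y_subst G p"
  have "Dy \<Psi> ?q = Dt_x \<Phi> 0 ?q - 2 * ?q (0, 1) * Dx \<Phi> ?q + 2 * ?q (1, 1) * \<Phi> ?q"
    using fun_cong[OF R0_Dy[OF R, of 0], of ?q] by simp
  moreover have "Dy \<Psi> ?q = linearization \<Psi> G p" by (rule Dy_xfun_y_subst[OF \<Psi>])
  moreover have "Dt_x \<Phi> 0 ?q = linearization \<Phi> H p"
    by (rule Dt_x_y_subst[OF \<Phi> G R0_pd_u_eq_0[OF R] H])
  moreover have "?q (0, 1) = G p" and "?q (1, 1) = Dx G p" by simp_all
  moreover have "Dx \<Phi> ?q = Dx \<Phi> p" by (rule xfun_y_subst[OF xfun_Dx[OF \<Phi>]])
  moreover have "\<Phi> ?q = \<Phi> p" by (rule xfun_y_subst[OF \<Phi>])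
  ultimately show ?thesis by (simp add: algebra_simps)
qed

lemma linearization_hierarchy_shift:
  assumes xf: "\<forall>k. xfun (chi k)" and R: "\<forall>k. R0 (chi k) (\<lambda>p. - chi (Suc k) p)"
  shows "linearization (chi (Suc k)) (chi l) p = linearization (chi k) (chi (Suc l)) p
           + 2 * (chi l p * Dx (chi k) p - chi k p * Dx (chi l) p)"
proof -
  have "Dx (\<lambda>p. - chi (Suc l) p) = R0_x (chi l)" using R R0_Dx by blast
  from linearization_R0[OF xf[rule_format, of k] xfun_uminus[OF xf[rule_format, of "Suc k"]]
      xf[rule_format, of l] R[rule_format, of k] this, of p]
  show ?thesis
    by (simp add: linearization_uminus_left linearization_uminus_right xfun_dpoly xf)
qed

section \<open>Symmetry from a shifted antisymmetric recursion\<close>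

lemma shift_recursion_diff:
  fixes M W :: "nat \<Rightarrow> nat \<Rightarrow> real"
  assumes S: "\<And>k j. M (Suc k) j = M k (Suc j) + 2 * W j k"
  shows "M (i + d) j - M i (j + d) = 2 * (\<Sum>s<d. W (j + s) (i + d - 1 - s))"
proof (induction d arbitrary: j)
  case (Suc d)
  have "M (i + Suc d) j - M i (j + Suc d) = 2 * W j (i + d) + (M (i + d) (Suc j) - M i (Suc j + d))"
    using S[of "i + d" j] by simp
  also have "\<dots> = 2 * W j (i + d) + 2 * (\<Sum>s<d. W (Suc j + s) (i + d - 1 - s))"
    using Suc.IH[of "Suc j"] by simp
  also have "\<dots> = 2 * (\<Sum>s<Suc d. W (j + s) (i + Suc d - 1 - s))"
    by (simp only: sum.lessThan_Suc_shift) (simp add: distrib_left)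
  finally show ?case .
qed simp

lemma sum_antisym_reflected_eq_0:
  fixes W :: "nat \<Rightarrow> nat \<Rightarrow> real"
  assumes A: "\<And>a b. W a b = - W b a"
  shows "(\<Sum>s<d. W (j + s) (j + d - 1 - s)) = 0"
proof -
  define f where "f s = W (j + s) (j + d - 1 - s)" for s
  have "(\<Sum>s<d. f s) = (\<Sum>s<d. f (d - Suc s))" by (rule sum.nat_diff_reindex[symmetric])
  also have "\<dots> = (\<Sum>s<d. - f s)"
  proof (rule sum.cong[OF refl])
    fix s assume "s \<in> {..<d}"
    then have "j + (d - Suc s) = j + d - 1 - s" "j + d - 1 - (d - Suc s) = j + s" by auto
    then show "f (d - Suc s) = - f s" unfolding f_def using A[of "j + d - 1 - s" "j + s"] by simp
  qed
  finally show ?thesis unfolding f_def by (simp add: sum_negf)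
qed

lemma symmetric_if_shift_antisym:
  fixes M W :: "nat \<Rightarrow> nat \<Rightarrow> real"
  assumes S: "\<And>k j. M (Suc k) j = M k (Suc j) + 2 * W j k"
    and A: "\<And>a b. W a b = - W b a"
  shows "M i j = M j i"
proof -
  have diag: "M (j + d) j = M j (j + d)" for j d
    using shift_recursion_diff[of M W, OF S, of j d j] sum_antisym_reflected_eq_0[of W j d, OF A]
    by simp
  show ?thesis using diag[of j "i - j"] diag[of i "j - i"] by (cases "j \<le> i") simp_all
qed

theorem proposition3:
  fixes chi :: "nat \<Rightarrow> dfun"
  assumes "\<forall>k. xfun (chi k)"
    and "chi 0 = (\<lambda>p. p (1, 0))"
    and "\<forall>k. R0 (chi k) (\<lambda>p. - chi (Suc k) p)"
  shows "\<forall>i j. jbr (chi i) (chi j) = (\<lambda>p. 0)"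
proof (intro allI ext)
  fix i j p
  define M where "M a b = linearization (chi a) (chi b) p" for a b
  define W where "W a b = chi a p * Dx (chi b) p - chi b p * Dx (chi a) p" for a b
  have "M (Suc k) l = M k (Suc l) + 2 * W l k" for k l
    unfolding M_def W_def by (rule linearization_hierarchy_shift[OF assms(1,3)])
  moreover have "W a b = - W b a" for a b
    unfolding W_def by simp
  ultimately have "M j i = M i j" by (rule symmetric_if_shift_antisym)
  then show "jbr (chi i) (chi j) p = 0"
    unfolding jbr_eq_linearization_diff[OF assms(1)[rule_format] assms(1)[rule_format]] M_def
    by simp
qed

end
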